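(* Let $N$ be a natural number, $\delta\subseteq{}^{\underline N}2$ and $0<k<N$. Then $\mathrm{HN}(\delta)>k$ if and only if there is $\delta^*\subseteq{}^{\underline N}2$ such that $\delta\preceq\delta^*$ and the elements of $\delta^*$ have pairwise disjoint domains, each of size $k$. In particular, if there is a $k$-selector for $\delta$, then $\mathrm{HN}(\delta)\geq k+1$.
   Context: $N=\{0,\ldots,N-1\}$; ${}^{\underline N}2$ is the set of all partial functions $\sigma$ with $\mathrm{dom}(\sigma)\subseteq N$ and values in $\{0,1\}$ (the empty function included). For $\delta_1,\delta_2\subseteq{}^{\underline N}2$, $\delta_1\preceq\delta_2$ means that for every $\sigma\in\delta_1$ there is $\rho\in\delta_2$ with $\rho\subseteq\sigma$. For $\delta\subseteq{}^{\underline N}2$, $\mathrm{hn}(\delta)$ is the maximum of $k+1$ over those $k\in\{0,\ldots,N-1\}$ such that for every $\delta'\subseteq\delta$ there is $\delta''\subseteq\delta'$ whose elements have pairwise disjoint domains and $|\bigcup_{\sigma\in\delta''}\mathrm{dom}(\sigma)|\geq k|\delta'|$; and $\mathrm{HN}(\delta)=\max\{\mathrm{hn}(\delta'):\delta'\subseteq{}^{\underline N}2,\ \delta\preceq\delta'\}$. A $k$-selector for $\delta$ is a function $F$ from $\delta$ to $k$-element subsets of $N$ such that for $\sigma,\rho\in\delta$: $F(\sigma)\subseteq\mathrm{dom}(\sigma)$, and $F(\sigma)\cap F(\rho)=\emptyset$ iff $\sigma\neq\rho$. *)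

theory Defs
  imports Main
begin

text \<open>Partial functions from N = {0..<N} to 2 = bool, as maps; the subset
relation on partial functions is map_le.\<close>

definition partfuns :: "nat \<Rightarrow> (nat \<rightharpoonup> bool) set" where
  "partfuns N = {\<sigma>. dom \<sigma> \<subseteq> {..<N}}"

definition prec :: "(nat \<rightharpoonup> bool) set \<Rightarrow> (nat \<rightharpoonup> bool) set \<Rightarrow> bool" where
  "prec \<delta>1 \<delta>2 \<longleftrightarrow> (\<forall>\<sigma>\<in>\<delta>1. \<exists>\<rho>\<in>\<delta>2. \<rho> \<subseteq>\<^sub>m \<sigma>)"

definition disjoint_doms :: "(nat \<rightharpoonup> bool) set \<Rightarrow> bool" where
  "disjoint_doms \<delta> \<longleftrightarrow> (\<forall>\<sigma>\<in>\<delta>. \<forall>\<rho>\<in>\<delta>. \<sigma> \<noteq> \<rho> \<longrightarrow> dom \<sigma> \<inter> dom \<rho> = {})"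

definition hn_good :: "nat \<Rightarrow> (nat \<rightharpoonup> bool) set \<Rightarrow> bool" where
  "hn_good k \<delta> \<longleftrightarrow> (\<forall>\<delta>'\<subseteq>\<delta>. \<exists>\<delta>''\<subseteq>\<delta>'. disjoint_doms \<delta>'' \<and>
       card (\<Union>\<sigma>\<in>\<delta>''. dom \<sigma>) \<ge> k * card \<delta>')"

definition hn :: "nat \<Rightarrow> (nat \<rightharpoonup> bool) set \<Rightarrow> nat" where
  "hn N \<delta> = Max {k + 1 | k. k < N \<and> hn_good k \<delta>}"

definition HN :: "nat \<Rightarrow> (nat \<rightharpoonup> bool) set \<Rightarrow> nat" where
  "HN N \<delta> = Max {hn N \<delta>' | \<delta>'. \<delta>' \<subseteq> partfuns N \<and> prec \<delta> \<delta>'}"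

definition selector :: "nat \<Rightarrow> nat \<Rightarrow> (nat \<rightharpoonup> bool) set \<Rightarrow> ((nat \<rightharpoonup> bool) \<Rightarrow> nat set) \<Rightarrow> bool" where
  "selector N k \<delta> F \<longleftrightarrow>
     (\<forall>\<sigma>\<in>\<delta>. F \<sigma> \<subseteq> {..<N} \<and> card (F \<sigma>) = k \<and> F \<sigma> \<subseteq> dom \<sigma>) \<and>
     (\<forall>\<sigma>\<in>\<delta>. \<forall>\<rho>\<in>\<delta>. F \<sigma> \<inter> F \<rho> = {} \<longleftrightarrow> \<sigma> \<noteq> \<rho>)"

end

theory Submission
  imports Defs
begin

text \<open>If some refinement \<open>\<delta>'\<close> of \<open>\<delta>\<close> has \<open>hn(\<delta>') > k\<close>, then every subfamily of \<open>\<delta>'\<close>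
covers at least \<open>k\<close> times as many points as it has members. By Hall's theorem applied to
\<open>k\<close> copies of each member, one can choose pairwise disjoint \<open>k\<close>-element subsets of the
domains; restricting each member to its chosen set gives the required family \<open>\<delta>*\<close>.
Conversely, a family with pairwise disjoint \<open>k\<close>-element domains witnesses \<open>hn > k\<close> by
taking \<open>\<delta>'' = \<delta>'\<close>. A \<open>k\<close>-selector is exactly such a choice of disjoint subsets for \<open>\<delta>\<close>
itself.\<close>

definition hall_condition :: "'a set \<Rightarrow> ('a \<Rightarrow> 'b set) \<Rightarrow> bool" where
  "hall_condition I A \<longleftrightarrow> (\<forall>S\<subseteq>I. card S \<le> card (\<Union>(A ` S)))"

lemma hall_conditionD: "hall_condition I A \<Longrightarrow> S \<subseteq> I \<Longrightarrow> card S \<le> card (\<Union>(A ` S))"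
  unfolding hall_condition_def by blast

text \<open>The key step of Rado's proof of Hall's theorem: by submodularity of the cardinality
of unions, a set with two elements can always be shrunk without violating the condition.\<close>

lemma hall_condition_remove_element:
  assumes fin: "finite I" "\<forall>i\<in>I. finite (A i)" and hall: "hall_condition I A"
    and i: "i \<in> I" and xy: "x \<in> A i" "y \<in> A i" "x \<noteq> y"
  shows "\<exists>z\<in>A i. hall_condition I (A(i := A i - {z}))"
proof (rule ccontr)
  have violator: "\<exists>S\<subseteq>I - {i}. card (\<Union>(A ` S) \<union> (A i - {z})) \<le> card S"
    if violated: "\<not> hall_condition I (A(i := A i - {z}))" for z
  proof -
    obtain S where S: "S \<subseteq> I" "\<not> card S \<le> card (\<Union>((A(i := A i - {z})) ` S))"
      using violated unfolding hall_condition_def by blast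
    have "i \<in> S"
    proof (rule ccontr)
      assume "i \<notin> S"
      then have "\<Union>((A(i := A i - {z})) ` S) = \<Union>(A ` S)" by auto
      then show False using S(2) hall_conditionD[OF hall S(1)] by simp
    qed
    then have "\<Union>((A(i := A i - {z})) ` S) = \<Union>(A ` (S - {i})) \<union> (A i - {z})" by auto
    moreover have "card S = Suc (card (S - {i}))"
      using \<open>i \<in> S\<close> S(1) fin(1) by (metis card_Suc_Diff1 finite_subset)
    ultimately show ?thesis using S by (intro exI[of _ "S - {i}"]) auto
  qed
  assume "\<not> (\<exists>z\<in>A i. hall_condition I (A(i := A i - {z})))"
  then obtain S T where S: "S \<subseteq> I - {i}" "card (\<Union>(A ` S) \<union> (A i - {x})) \<le> card S"
    and T: "T \<subseteq> I - {i}" "card (\<Union>(A ` T) \<union> (A i - {y})) \<le> card T"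
    using violator[of x] violator[of y] xy by blast
  define X where "X = \<Union>(A ` S) \<union> (A i - {x})"
  define Y where "Y = \<Union>(A ` T) \<union> (A i - {y})"
  have finST: "finite S" "finite T" using S(1) T(1) fin(1) by (auto intro: finite_subset)
  have finXY: "finite X" "finite Y" using finST S(1) T(1) fin(2) i by (auto simp: X_def Y_def)
  have "i \<notin> S \<union> T" and iST: "insert i (S \<union> T) \<subseteq> I" using S(1) T(1) i by auto
  then have "card (S \<union> T) + 1 = card (insert i (S \<union> T))" using finST by simp
  also have "\<dots> \<le> card (\<Union>(A ` insert i (S \<union> T)))" by (rule hall_conditionD[OF hall iST])
  also have "\<Union>(A ` insert i (S \<union> T)) = X \<union> Y" using xy by (auto simp: X_def Y_def)
  finally have union: "card (S \<union> T) + 1 \<le> card (X \<union> Y)" .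
  have "S \<inter> T \<subseteq> I" using S(1) by blast
  then have "card (S \<inter> T) \<le> card (\<Union>(A ` (S \<inter> T)))" by (rule hall_conditionD[OF hall])
  also have "\<dots> \<le> card (X \<inter> Y)" using finXY by (intro card_mono) (auto simp: X_def Y_def)
  finally have inter: "card (S \<inter> T) \<le> card (X \<inter> Y)" .
  have "card S + card T + 1 \<le> card X + card Y"
    using union inter card_Un_Int[OF finST] card_Un_Int[OF finXY] by linarith
  then show False using S(2) T(2) by (simp add: X_def Y_def)
qed

theorem hall_marriage:
  assumes "finite I" "\<forall>i\<in>I. finite (A i)" "hall_condition I A"
  shows "\<exists>f. inj_on f I \<and> (\<forall>i\<in>I. f i \<in> A i)"
  using assms
proof (induction "\<Sum>i\<in>I. card (A i)" arbitrary: A rule: less_induct)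
  case less
  show ?case
  proof (cases "\<exists>i\<in>I. 2 \<le> card (A i)")
    case True
    then obtain i where i: "i \<in> I" and "\<not> card (A i) \<le> Suc 0" by auto
    then obtain x y where xy: "x \<in> A i" "y \<in> A i" "x \<noteq> y"
      using card_le_Suc0_iff_eq[of "A i"] less.prems(2) by auto
    obtain z where z: "z \<in> A i" and hall': "hall_condition I (A(i := A i - {z}))"
      using hall_condition_remove_element[OF less.prems i xy] by blast
    have "card (A i - {z}) < card (A i)" using less.prems(2) i z by (meson card_Diff1_less)
    then have smaller: "(\<Sum>j\<in>I. card ((A(i := A i - {z})) j)) < (\<Sum>j\<in>I. card (A j))"
      using less.prems(1) i by (intro sum_strict_mono_ex1) (auto intro: bexI[of _ i])
    have "\<forall>j\<in>I. finite ((A(i := A i - {z})) j)" using less.prems(2) by simp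
    then obtain f where "inj_on f I" "\<forall>j\<in>I. f j \<in> (A(i := A i - {z})) j"
      using less.hyps[OF smaller less.prems(1) _ hall'] by blast
    then show ?thesis by (metis Diff_iff fun_upd_apply)
  next
    case False
    have singleton: "\<exists>a. A j = {a}" if "j \<in> I" for j
    proof -
      have "1 \<le> card (A j)" using hall_conditionD[OF less.prems(3), of "{j}"] that by simp
      moreover have "\<not> 2 \<le> card (A j)" using False that by blast
      ultimately show ?thesis by (simp flip: card_1_singleton_iff)
    qed
    have "inj_on (\<lambda>j. the_elem (A j)) I"
    proof (rule inj_onI)
      fix j j' assume j: "j \<in> I" "j' \<in> I" and eq: "the_elem (A j) = the_elem (A j')"
      obtain a b where ab: "A j = {a}" "A j' = {b}" using singleton[OF j(1)] singleton[OF j(2)] by blast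
      have "card {j, j'} \<le> card (A j \<union> A j')"
        using hall_conditionD[OF less.prems(3), of "{j, j'}"] j by simp
      also have "A j \<union> A j' = {a}" using ab eq by simp
      finally show "j = j'" by (cases "j = j'") auto
    qed
    moreover have "the_elem (A j) \<in> A j" if "j \<in> I" for j
      using singleton[OF that] by (metis singletonI the_elem_eq)
    ultimately show ?thesis by blast
  qed
qed

text \<open>Apply Hall's theorem to \<open>k\<close> copies of every index.\<close>

lemma hall_marriage_multiple:
  assumes "finite I" "\<forall>i\<in>I. finite (A i)" "\<forall>S\<subseteq>I. k * card S \<le> card (\<Union>(A ` S))"
  shows "\<exists>F. (\<forall>i\<in>I. F i \<subseteq> A i \<and> card (F i) = k) \<and>
             (\<forall>i\<in>I. \<forall>j\<in>I. i \<noteq> j \<longrightarrow> F i \<inter> F j = {})"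
proof -
  define J where "J = I \<times> {..<k}"
  define B where "B p = A (fst p)" for p :: "'a \<times> nat"
  have "hall_condition J B"
    unfolding hall_condition_def
  proof (intro allI impI)
    fix S assume S: "S \<subseteq> J"
    then have PI: "fst ` S \<subseteq> I" unfolding J_def by auto
    have "S \<subseteq> fst ` S \<times> {..<k}" using S unfolding J_def by force
    then have "card S \<le> card (fst ` S \<times> {..<k})"
      using finite_subset[OF PI assms(1)] by (intro card_mono) auto
    also have "\<dots> = k * card (fst ` S)" by (simp add: card_cartesian_product)
    also have "\<dots> \<le> card (\<Union>(A ` fst ` S))" using assms(3) PI by blast
    also have "\<Union>(A ` fst ` S) = \<Union>(B ` S)" unfolding B_def by auto
    finally show "card S \<le> card (\<Union>(B ` S))" .
  qed
  moreover have "finite J" "\<forall>p\<in>J. finite (B p)" using assms(1,2) unfolding J_def B_def by auto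
  ultimately obtain f where f: "inj_on f J" "\<forall>p\<in>J. f p \<in> B p"
    using hall_marriage by blast
  define F where "F i = (\<lambda>j. f (i, j)) ` {..<k}" for i
  have "F i \<subseteq> A i \<and> card (F i) = k" if i: "i \<in> I" for i
  proof
    show "F i \<subseteq> A i" using f(2) i unfolding F_def B_def J_def by auto
    have "inj_on (\<lambda>j. f (i, j)) {..<k}" using f(1) i unfolding inj_on_def J_def by auto
    then show "card (F i) = k" unfolding F_def by (simp add: card_image)
  qed
  moreover have "\<forall>i\<in>I. \<forall>j\<in>I. i \<noteq> j \<longrightarrow> F i \<inter> F j = {}"
    using f(1) unfolding F_def inj_on_def J_def by blast
  ultimately show ?thesis by blast
qed

lemma finite_partfuns: "finite (partfuns N)"
proof -
  have "partfuns N = (\<Union>A\<in>Pow {..<N}. {m. dom m = A \<and> ran m \<subseteq> UNIV})"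
    unfolding partfuns_def by auto
  also have "finite \<dots>"
    by (intro finite_UN_I finite_set_of_finite_maps) (auto intro: finite_subset[OF _ finite_lessThan])
  finally show ?thesis .
qed

lemma finite_dom_if_partfuns: "\<sigma> \<in> partfuns N \<Longrightarrow> finite (dom \<sigma>)"
  unfolding partfuns_def by (auto intro: finite_subset[OF _ finite_lessThan])

lemma hn_good_0: "hn_good 0 \<delta>"
  unfolding hn_good_def by (auto intro!: exI[of _ "{}"] simp: disjoint_doms_def)

lemma hn_good_antimono: "k \<le> k' \<Longrightarrow> hn_good k' \<delta> \<Longrightarrow> hn_good k \<delta>"
  unfolding hn_good_def by (meson le_trans mult_le_mono1)

lemma less_hn_iff:
  assumes "0 < N"
  shows "k < hn N \<delta> \<longleftrightarrow> k < N \<and> hn_good k \<delta>"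
proof -
  let ?K = "{k + 1 | k. k < N \<and> hn_good k \<delta>}"
  have "?K \<subseteq> {..N}" by auto
  then have "finite ?K" by (rule finite_subset) simp
  moreover have "0 + 1 \<in> ?K" using assms hn_good_0 by blast
  then have "?K \<noteq> {}" by blast
  ultimately have "k < hn N \<delta> \<longleftrightarrow> (\<exists>a\<in>?K. k < a)" unfolding hn_def by (rule Max_gr_iff)
  also have "\<dots> \<longleftrightarrow> (\<exists>k'. k \<le> k' \<and> k' < N \<and> hn_good k' \<delta>)" by (auto simp: less_Suc_eq_le)
  also have "\<dots> \<longleftrightarrow> k < N \<and> hn_good k \<delta>" using hn_good_antimono le_less_trans by blast
  finally show ?thesis .
qed

lemma less_HN_iff:
  assumes "0 < N"
  shows "k < HN N \<delta> \<longleftrightarrow> (\<exists>\<delta>'\<subseteq>partfuns N. prec \<delta> \<delta>' \<and> k < hn N \<delta>')"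
proof -
  let ?H = "{hn N \<delta>' | \<delta>'. \<delta>' \<subseteq> partfuns N \<and> prec \<delta> \<delta>'}"
  have "?H \<subseteq> hn N ` Pow (partfuns N)" by auto
  then have "finite ?H" using finite_partfuns by (meson finite_Pow_iff finite_imageI finite_subset)
  moreover have "{Map.empty} \<subseteq> partfuns N \<and> prec \<delta> {Map.empty}"
    unfolding partfuns_def prec_def by auto
  then have "?H \<noteq> {}" by blast
  ultimately show ?thesis unfolding HN_def by (auto simp: Max_gr_iff)
qed

lemma less_HN_iff_hn_good:
  assumes "0 < N" "k < N"
  shows "k < HN N \<delta> \<longleftrightarrow> (\<exists>\<delta>'\<subseteq>partfuns N. prec \<delta> \<delta>' \<and> hn_good k \<delta>')"
  using assms by (simp add: less_HN_iff less_hn_iff)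

lemma hn_good_imp_hall_multiple:
  assumes "\<delta> \<subseteq> partfuns N" "hn_good k \<delta>"
  shows "\<forall>S\<subseteq>\<delta>. k * card S \<le> card (\<Union>(dom ` S))"
proof (intro allI impI)
  fix S assume S: "S \<subseteq> \<delta>"
  then obtain T where T: "T \<subseteq> S" "k * card S \<le> card (\<Union>(dom ` T))"
    using assms(2) unfolding hn_good_def by blast
  have "\<Union>(dom ` S) \<subseteq> {..<N}" using S assms(1) unfolding partfuns_def by blast
  then have "card (\<Union>(dom ` T)) \<le> card (\<Union>(dom ` S))"
    using T(1) finite_subset[OF _ finite_lessThan] by (intro card_mono) auto
  then show "k * card S \<le> card (\<Union>(dom ` S))" using T(2) by linarith
qed

lemma hn_good_if_disjoint_doms:
  assumes "\<delta> \<subseteq> partfuns N" "disjoint_doms \<delta>" "\<forall>\<sigma>\<in>\<delta>. card (dom \<sigma>) = k"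
  shows "hn_good k \<delta>"
  unfolding hn_good_def
proof (intro allI impI)
  fix \<delta>' assume \<delta>': "\<delta>' \<subseteq> \<delta>"
  have disjoint: "disjoint_doms \<delta>'" using assms(2) \<delta>' unfolding disjoint_doms_def by blast
  have "finite \<delta>'" using \<delta>' assms(1) finite_partfuns by (meson finite_subset order_trans)
  then have "card (\<Union>\<sigma>\<in>\<delta>'. dom \<sigma>) = (\<Sum>\<sigma>\<in>\<delta>'. card (dom \<sigma>))"
    using \<delta>' assms(1,2) finite_dom_if_partfuns unfolding disjoint_doms_def
    by (intro card_UN_disjoint) blast+
  also have "\<dots> = (\<Sum>\<sigma>\<in>\<delta>'. k)" using \<delta>' assms(3) by (intro sum.cong) auto
  also have "\<dots> = k * card \<delta>'" by simp
  finally have "k * card \<delta>' \<le> card (\<Union>\<sigma>\<in>\<delta>'. dom \<sigma>)" by simp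
  with disjoint show "\<exists>\<delta>''\<subseteq>\<delta>'. disjoint_doms \<delta>'' \<and> k * card \<delta>' \<le> card (\<Union>\<sigma>\<in>\<delta>''. dom \<sigma>)"
    by (intro exI[of _ \<delta>']) simp
qed

lemma disjoint_refinement_if_disjoint_subsets:
  assumes "\<delta>' \<subseteq> partfuns N" "prec \<delta> \<delta>'"
    and "\<forall>\<sigma>\<in>\<delta>'. F \<sigma> \<subseteq> dom \<sigma> \<and> card (F \<sigma>) = k"
    and "\<forall>\<sigma>\<in>\<delta>'. \<forall>\<rho>\<in>\<delta>'. \<sigma> \<noteq> \<rho> \<longrightarrow> F \<sigma> \<inter> F \<rho> = {}"
  shows "\<exists>\<delta>s. \<delta>s \<subseteq> partfuns N \<and> prec \<delta> \<delta>s \<and> disjoint_doms \<delta>s \<and> (\<forall>\<sigma>\<in>\<delta>s. card (dom \<sigma>) = k)"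
proof (intro exI conjI)
  let ?\<delta>s = "(\<lambda>\<sigma>. \<sigma> |` F \<sigma>) ` \<delta>'"
  have dom_restrict: "dom (\<sigma> |` F \<sigma>) = F \<sigma>" if "\<sigma> \<in> \<delta>'" for \<sigma> using assms(3) that by auto
  have "dom (\<sigma> |` F \<sigma>) \<subseteq> dom \<sigma>" for \<sigma> by auto
  then show "?\<delta>s \<subseteq> partfuns N" using assms(1) unfolding partfuns_def by blast
  have restrict_le: "\<sigma> |` F \<sigma> \<subseteq>\<^sub>m \<sigma>" for \<sigma> by (auto simp: map_le_def)
  show "prec \<delta> ?\<delta>s" unfolding prec_def
  proof
    fix \<tau> assume "\<tau> \<in> \<delta>"
    then obtain \<sigma> where "\<sigma> \<in> \<delta>'" "\<sigma> \<subseteq>\<^sub>m \<tau>" using assms(2) unfolding prec_def by blast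
    then show "\<exists>\<rho>\<in>?\<delta>s. \<rho> \<subseteq>\<^sub>m \<tau>" using restrict_le map_le_trans by blast
  qed
  show "disjoint_doms ?\<delta>s" unfolding disjoint_doms_def
  proof (intro ballI impI)
    fix \<tau> \<tau>' assume "\<tau> \<in> ?\<delta>s" "\<tau>' \<in> ?\<delta>s" "\<tau> \<noteq> \<tau>'"
    then obtain \<sigma> \<sigma>' where "\<sigma> \<in> \<delta>'" "\<sigma>' \<in> \<delta>'" "\<sigma> \<noteq> \<sigma>'"
        "\<tau> = \<sigma> |` F \<sigma>" "\<tau>' = \<sigma>' |` F \<sigma>'"
      by blast
    then show "dom \<tau> \<inter> dom \<tau>' = {}" using dom_restrict assms(4) by simp
  qed
  show "\<forall>\<sigma>\<in>?\<delta>s. card (dom \<sigma>) = k" using dom_restrict assms(3) by auto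
qed

lemma disjoint_refinement_if_hn_good:
  assumes "\<delta>' \<subseteq> partfuns N" "prec \<delta> \<delta>'" "hn_good k \<delta>'"
  shows "\<exists>\<delta>s. \<delta>s \<subseteq> partfuns N \<and> prec \<delta> \<delta>s \<and> disjoint_doms \<delta>s \<and> (\<forall>\<sigma>\<in>\<delta>s. card (dom \<sigma>) = k)"
proof -
  have fin: "finite \<delta>'" "\<forall>\<sigma>\<in>\<delta>'. finite (dom \<sigma>)"
    using finite_subset[OF assms(1) finite_partfuns] assms(1) finite_dom_if_partfuns by auto
  obtain F where "\<forall>\<sigma>\<in>\<delta>'. F \<sigma> \<subseteq> dom \<sigma> \<and> card (F \<sigma>) = k"
      "\<forall>\<sigma>\<in>\<delta>'. \<forall>\<rho>\<in>\<delta>'. \<sigma> \<noteq> \<rho> \<longrightarrow> F \<sigma> \<inter> F \<rho> = {}"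
    using hall_marriage_multiple[OF fin hn_good_imp_hall_multiple[OF assms(1,3)]] by blast
  then show ?thesis by (rule disjoint_refinement_if_disjoint_subsets[OF assms(1,2)])
qed

lemma disjoint_refinement_if_selector:
  assumes "\<delta> \<subseteq> partfuns N" "selector N k \<delta> F"
  shows "\<exists>\<delta>s. \<delta>s \<subseteq> partfuns N \<and> prec \<delta> \<delta>s \<and> disjoint_doms \<delta>s \<and> (\<forall>\<sigma>\<in>\<delta>s. card (dom \<sigma>) = k)"
proof -
  have "prec \<delta> \<delta>" unfolding prec_def using map_le_refl by blast
  moreover have "\<forall>\<sigma>\<in>\<delta>. F \<sigma> \<subseteq> dom \<sigma> \<and> card (F \<sigma>) = k"
    and "\<forall>\<sigma>\<in>\<delta>. \<forall>\<rho>\<in>\<delta>. \<sigma> \<noteq> \<rho> \<longrightarrow> F \<sigma> \<inter> F \<rho> = {}"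
    using assms(2) unfolding selector_def by blast+
  ultimately show ?thesis by (rule disjoint_refinement_if_disjoint_subsets[OF assms(1)])
qed

theorem proposition6p14:
  fixes N k :: nat and \<delta> :: "(nat \<rightharpoonup> bool) set"
  assumes "\<delta> \<subseteq> partfuns N" and "0 < k" and "k < N"
  shows "(HN N \<delta> > k \<longleftrightarrow>
            (\<exists>\<delta>s. \<delta>s \<subseteq> partfuns N \<and> prec \<delta> \<delta>s \<and> disjoint_doms \<delta>s \<and>
                  (\<forall>\<sigma>\<in>\<delta>s. card (dom \<sigma>) = k)))
       \<and> ((\<exists>F. selector N k \<delta> F) \<longrightarrow> HN N \<delta> \<ge> k + 1)"
proof -
  have HN_iff: "k < HN N \<delta> \<longleftrightarrow> (\<exists>\<delta>'\<subseteq>partfuns N. prec \<delta> \<delta>' \<and> hn_good k \<delta>')"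
    using assms(2,3) by (intro less_HN_iff_hn_good) simp_all
  have iff: "k < HN N \<delta> \<longleftrightarrow>
      (\<exists>\<delta>s. \<delta>s \<subseteq> partfuns N \<and> prec \<delta> \<delta>s \<and> disjoint_doms \<delta>s \<and> (\<forall>\<sigma>\<in>\<delta>s. card (dom \<sigma>) = k))"
  proof
    assume "k < HN N \<delta>"
    then obtain \<delta>' where "\<delta>' \<subseteq> partfuns N" "prec \<delta> \<delta>'" "hn_good k \<delta>'" using HN_iff by blast
    then show "\<exists>\<delta>s. \<delta>s \<subseteq> partfuns N \<and> prec \<delta> \<delta>s \<and> disjoint_doms \<delta>s \<and> (\<forall>\<sigma>\<in>\<delta>s. card (dom \<sigma>) = k)"
      by (rule disjoint_refinement_if_hn_good)
  next
    assume "\<exists>\<delta>s. \<delta>s \<subseteq> partfuns N \<and> prec \<delta> \<delta>s \<and> disjoint_doms \<delta>s \<and> (\<forall>\<sigma>\<in>\<delta>s. card (dom \<sigma>) = k)"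
    then show "k < HN N \<delta>" using HN_iff hn_good_if_disjoint_doms by blast
  qed
  moreover have "k < HN N \<delta>" if "selector N k \<delta> F" for F
    using iff disjoint_refinement_if_selector[OF assms(1) that] by (rule iffD2)
  ultimately show ?thesis by (auto simp: Suc_le_eq)
qed

end
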